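(* For every odd positive integer $N$, the sandpile group $G_{\Gamma_N}$ on an $N\times N$ square domain $\Gamma_N\subset\mathbb{Z}^2$ has a cyclic subgroup isomorphic to $\mathbb{Z}/\tfrac{N+1}{2}\mathbb{Z}$, of order $\tfrac{N+1}{2}$.
   Context: An $N\times N$ square domain is a set $\{a,\dots,a+N-1\}\times\{b,\dots,b+N-1\}\subset\mathbb{Z}^2$. For finite $\Gamma\subset\mathbb{Z}^2$, the reduced Laplacian is $(\Delta_\Gamma f)(v)=\sum_{w\in\Gamma,\,w\sim v}f(w)-4f(v)$ (nearest-neighbor adjacency in $\mathbb{Z}^2$; all vertices outside $\Gamma$ are contracted to a sink), and the sandpile group is $G_\Gamma=\mathbb{Z}^\Gamma/\Delta_\Gamma(\mathbb{Z}^\Gamma)$. *)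

theory Defs
  imports "HOL-Algebra.Algebra"
begin

definition square_domain :: "int \<Rightarrow> int \<Rightarrow> nat \<Rightarrow> (int \<times> int) set" where
  "square_domain a b N = {a..a + int N - 1} \<times> {b..b + int N - 1}"

definition adj :: "int \<times> int \<Rightarrow> int \<times> int \<Rightarrow> bool" where
  "adj v w \<longleftrightarrow> \<bar>fst v - fst w\<bar> + \<bar>snd v - snd w\<bar> = 1"

text \<open>The free abelian group Z^Gamma: integer functions supported on Gamma,
  with pointwise addition (written multiplicatively, as HOL-Algebra requires).\<close>
definition ZGamma :: "(int \<times> int) set \<Rightarrow> ((int \<times> int) \<Rightarrow> int) monoid" where
  "ZGamma \<Gamma> = \<lparr> carrier = {f. \<forall>v. v \<notin> \<Gamma> \<longrightarrow> f v = 0},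
                  monoid.mult = (\<lambda>f g v. f v + g v),
                  monoid.one = (\<lambda>v. 0) \<rparr>"

text \<open>Reduced Laplacian (vertices outside Gamma are contracted into the sink).\<close>
definition reduced_laplacian :: "(int \<times> int) set \<Rightarrow> ((int \<times> int) \<Rightarrow> int) \<Rightarrow> (int \<times> int) \<Rightarrow> int" where
  "reduced_laplacian \<Gamma> f v =
     (if v \<in> \<Gamma> then (\<Sum>w\<in>{w\<in>\<Gamma>. adj w v}. f w) - 4 * f v else 0)"

definition sandpile_group :: "(int \<times> int) set \<Rightarrow> ((int \<times> int) \<Rightarrow> int) set monoid" where
  "sandpile_group \<Gamma> = ZGamma \<Gamma> Mod (reduced_laplacian \<Gamma> ` carrier (ZGamma \<Gamma>))"

end

(*
  The reduced Laplacian of a finite \<Gamma> has trivial kernel by the maximum principle, so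
  some positive multiple D of the configuration with one chip at the corner p = (a, b)
  lies in its image, and the class of that configuration has finite order d in G\<^sub>\<Gamma>.
  The weight c(x, y) = (x - a + 1) (y - b + 1) is discrete harmonic and, at the lattice
  points just outside the N x N square, vanishes or is a multiple of N + 1.  As the
  Laplacian is symmetric, the sum of c \<cdot> \<Delta>f over the square is divisible by N + 1
  for every f; since c(p) = 1, this forces N + 1 to divide d.  A suitable power of the
  class then has order exactly (N + 1) / 2 and generates the required cyclic subgroup.
*)
theory Submission
  imports Defs "Jordan_Normal_Form.Determinant"
begin

definition chips_at :: "int \<times> int \<Rightarrow> int \<Rightarrow> int \<times> int \<Rightarrow> int" where
  "chips_at p k = (\<lambda>v. if v = p then k else 0)"

lemma reduced_laplacian_at:
  assumes "(x, y) \<in> \<Gamma>"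
  shows "reduced_laplacian \<Gamma> f (x, y) =
    of_bool ((x + 1, y) \<in> \<Gamma>) * f (x + 1, y) + of_bool ((x - 1, y) \<in> \<Gamma>) * f (x - 1, y) +
    of_bool ((x, y + 1) \<in> \<Gamma>) * f (x, y + 1) + of_bool ((x, y - 1) \<in> \<Gamma>) * f (x, y - 1) -
    4 * f (x, y)"
proof -
  have "{w \<in> \<Gamma>. adj w (x, y)} = {(x + 1, y), (x - 1, y), (x, y + 1), (x, y - 1)} \<inter> \<Gamma>"
    by (auto simp: adj_def abs_if split: if_splits)
  then have "(\<Sum>w\<in>{w \<in> \<Gamma>. adj w (x, y)}. f w) =
      (\<Sum>w\<in>{(x + 1, y), (x - 1, y), (x, y + 1), (x, y - 1)}. of_bool (w \<in> \<Gamma>) * f w)"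
    by (simp add: sum.inter_restrict)
  then show ?thesis
    using assms by (simp add: reduced_laplacian_def)
qed

lemma reduced_laplacian_scale: "reduced_laplacian \<Gamma> (\<lambda>v. c * f v) v = c * reduced_laplacian \<Gamma> f v"
  by (simp add: reduced_laplacian_def sum_distrib_left algebra_simps)

definition laplacian_entry :: "int \<times> int \<Rightarrow> int \<times> int \<Rightarrow> int" where
  "laplacian_entry v w = of_bool (adj v w) - 4 * of_bool (v = w)"

lemma laplacian_entry_commute: "laplacian_entry v w = laplacian_entry w v"
  by (auto simp: laplacian_entry_def adj_def abs_minus_commute)

lemma reduced_laplacian_eq_sum:
  assumes "finite \<Gamma>" "v \<in> \<Gamma>"
  shows "reduced_laplacian \<Gamma> f v = (\<Sum>w\<in>\<Gamma>. laplacian_entry v w * f w)"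
proof -
  have "laplacian_entry v w * f w = (if adj w v then f w else 0) - 4 * (if v = w then f w else 0)"
    for w by (simp add: laplacian_entry_def adj_def abs_minus_commute)
  then have "(\<Sum>w\<in>\<Gamma>. laplacian_entry v w * f w) =
      (\<Sum>w\<in>\<Gamma>. if adj w v then f w else 0) - 4 * (\<Sum>w\<in>\<Gamma>. if v = w then f w else 0)"
    by (simp add: sum_subtractf sum_distrib_left)
  then show ?thesis
    using assms by (simp add: reduced_laplacian_def sum.inter_filter)
qed

lemma sum_mult_reduced_laplacian_commute:
  assumes "finite \<Gamma>"
  shows "(\<Sum>v\<in>\<Gamma>. f v * reduced_laplacian \<Gamma> g v) = (\<Sum>v\<in>\<Gamma>. g v * reduced_laplacian \<Gamma> f v)"
proof -
  have "(\<Sum>v\<in>\<Gamma>. f v * reduced_laplacian \<Gamma> g v) = (\<Sum>v\<in>\<Gamma>. \<Sum>w\<in>\<Gamma>. f v * laplacian_entry v w * g w)"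
    using assms by (simp add: reduced_laplacian_eq_sum sum_distrib_left mult.assoc)
  also have "\<dots> = (\<Sum>w\<in>\<Gamma>. \<Sum>v\<in>\<Gamma>. g w * laplacian_entry w v * f v)"
    by (subst sum.swap) (simp add: laplacian_entry_commute mult_ac)
  also have "\<dots> = (\<Sum>w\<in>\<Gamma>. g w * reduced_laplacian \<Gamma> f w)"
    using assms by (simp add: reduced_laplacian_eq_sum sum_distrib_left mult.assoc)
  finally show ?thesis .
qed

lemma reduced_laplacian_max_propagates_right:
  assumes "(x, y) \<in> \<Gamma>" "reduced_laplacian \<Gamma> f (x, y) = 0"
    and "\<forall>w\<in>\<Gamma>. f w \<le> f (x, y)" "f (x, y) > 0"
  shows "(x + 1, y) \<in> \<Gamma> \<and> f (x + 1, y) = f (x, y)"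
proof -
  have bound: "of_bool (w \<in> \<Gamma>) * f w \<le> f (x, y)" for w
    using assms(3,4) by auto
  have "of_bool ((x + 1, y) \<in> \<Gamma>) * f (x + 1, y) = f (x, y)"
    using reduced_laplacian_at[OF assms(1), of f] assms(2)
      bound[of "(x + 1, y)"] bound[of "(x - 1, y)"] bound[of "(x, y + 1)"] bound[of "(x, y - 1)"]
    by linarith
  then show ?thesis
    using assms(4) by (cases "(x + 1, y) \<in> \<Gamma>") auto
qed

lemma reduced_laplacian_eq_0_imp_le_0:
  assumes "finite \<Gamma>" "\<forall>v\<in>\<Gamma>. reduced_laplacian \<Gamma> f v = 0" "v \<in> \<Gamma>"
  shows "f v \<le> 0"
proof (rule ccontr)
  assume "\<not> f v \<le> 0"
  define M where "M = Max (f ` \<Gamma>)"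
  have le_M: "\<forall>w\<in>\<Gamma>. f w \<le> M"
    using assms(1) by (simp add: M_def)
  have "M > 0"
    using le_M assms(3) \<open>\<not> f v \<le> 0\<close> by force
  define S where "S = {w \<in> \<Gamma>. f w = M}"
  have "M \<in> f ` \<Gamma>"
    unfolding M_def using assms(1,3) by (intro Max_in) auto
  then have "finite S" "S \<noteq> {}"
    using assms(1) by (auto simp: S_def)
  \<comment> \<open>A maximiser furthest to the right: the maximum would propagate one step further.\<close>
  then have "Max (fst ` S) \<in> fst ` S"
    by (intro Max_in) auto
  then obtain x y where xy: "(x, y) \<in> S" "x = Max (fst ` S)"
    by force
  then have "(x + 1, y) \<in> \<Gamma> \<and> f (x + 1, y) = M"
    using reduced_laplacian_max_propagates_right[of x y \<Gamma> f] assms(2) le_M \<open>M > 0\<close>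
    by (simp add: S_def)
  then have "x + 1 \<le> Max (fst ` S)"
    using \<open>finite S\<close> by (intro Max_ge) (auto simp: S_def image_iff)
  then show False
    using xy(2) by simp
qed

lemma reduced_laplacian_eq_0_imp_eq_0:
  assumes "finite \<Gamma>" "\<forall>v\<in>\<Gamma>. reduced_laplacian \<Gamma> f v = 0" "v \<in> \<Gamma>"
  shows "f v = 0"
proof -
  have "\<forall>v\<in>\<Gamma>. reduced_laplacian \<Gamma> (\<lambda>w. - 1 * f w) v = 0"
    using assms(2) by (simp only: reduced_laplacian_scale) simp
  then have "- f v \<le> 0"
    using reduced_laplacian_eq_0_imp_le_0[OF assms(1) _ assms(3)] by fastforce
  then show ?thesis
    using reduced_laplacian_eq_0_imp_le_0[OF assms] by simp
qed

lemma mult_mat_vec_col_adj_mat: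
  assumes "A \<in> carrier_mat n n" "j < n"
  shows "A *\<^sub>v col (adj_mat A) j = det A \<cdot>\<^sub>v unit_vec n j"
proof -
  have "A *\<^sub>v col (adj_mat A) j = col (A * adj_mat A) j"
    using assms adj_mat(1)[OF assms(1)] by simp
  also have "\<dots> = det A \<cdot>\<^sub>v unit_vec n j"
    using adj_mat(2)[OF assms(1)] assms(2) by simp
  finally show ?thesis .
qed

definition laplacian_mat :: "(nat \<Rightarrow> int \<times> int) \<Rightarrow> nat \<Rightarrow> int mat" where
  "laplacian_mat e n = mat n n (\<lambda>(i, j). laplacian_entry (e i) (e j))"

lemma reduced_laplacian_in_coordinates:
  assumes "finite \<Gamma>" "bij_betw e {0..<n} \<Gamma>" "i < n"
  shows "reduced_laplacian \<Gamma> f (e i) = (laplacian_mat e n *\<^sub>v vec n (\<lambda>j. f (e j))) $ i"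
proof -
  have "e i \<in> \<Gamma>"
    using assms(2,3) bij_betwE by fastforce
  then have "reduced_laplacian \<Gamma> f (e i) = (\<Sum>w\<in>\<Gamma>. laplacian_entry (e i) w * f w)"
    by (rule reduced_laplacian_eq_sum[OF assms(1)])
  also have "\<dots> = (\<Sum>j\<in>{0..<n}. laplacian_entry (e i) (e j) * f (e j))"
    by (rule sum.reindex_bij_betw[OF assms(2), symmetric])
  also have "\<dots> = (laplacian_mat e n *\<^sub>v vec n (\<lambda>j. f (e j))) $ i"
    using assms(3) by (simp add: laplacian_mat_def scalar_prod_def)
  finally show ?thesis .
qed

lemma ex_ZGamma_coordinates:
  assumes "bij_betw e {0..<n} \<Gamma>" "v \<in> carrier_vec n"
  shows "\<exists>f\<in>carrier (ZGamma \<Gamma>). vec n (\<lambda>j. f (e j)) = v"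
proof
  let ?f = "\<lambda>q. if q \<in> \<Gamma> then v $ the_inv_into {0..<n} e q else 0"
  show "?f \<in> carrier (ZGamma \<Gamma>)"
    by (simp add: ZGamma_def)
  have "?f (e j) = v $ j" if "j < n" for j
    using assms(1) that by (auto simp: bij_betw_def the_inv_into_f_f)
  then show "vec n (\<lambda>j. ?f (e j)) = v"
    using assms(2) by (intro eq_vecI) auto
qed

lemma det_laplacian_mat_neq_0:
  assumes "finite \<Gamma>" "bij_betw e {0..<n} \<Gamma>"
  shows "det (laplacian_mat e n) \<noteq> 0"
proof -
  have "v = 0\<^sub>v n" if v: "v \<in> carrier_vec n" and Av: "laplacian_mat e n *\<^sub>v v = 0\<^sub>v n" for v
  proof -
    obtain f where f: "vec n (\<lambda>j. f (e j)) = v"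
      using ex_ZGamma_coordinates[OF assms(2) v] by blast
    have "\<forall>q\<in>\<Gamma>. reduced_laplacian \<Gamma> f q = 0"
    proof
      fix q assume "q \<in> \<Gamma>"
      then obtain i where "i < n" "q = e i"
        using assms(2) by (metis atLeastLessThan_iff bij_betw_def imageE)
      then show "reduced_laplacian \<Gamma> f q = 0"
        using reduced_laplacian_in_coordinates[OF assms] f Av by simp
    qed
    then have "f (e j) = 0" if "j < n" for j
      using reduced_laplacian_eq_0_imp_eq_0[OF assms(1)] bij_betwE[OF assms(2)] that by simp
    then show ?thesis
      using f by (auto simp: zero_vec_def)
  qed
  then show ?thesis
    using det_0_iff_vec_prod_zero[of "laplacian_mat e n" n] by (auto simp: laplacian_mat_def)
qed

lemma ex_reduced_laplacian_eq_chips_at: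
  assumes "finite \<Gamma>" "p \<in> \<Gamma>"
  shows "\<exists>D>0. \<exists>g\<in>carrier (ZGamma \<Gamma>). reduced_laplacian \<Gamma> g = chips_at p D"
proof -
  obtain e where e: "bij_betw e {0..<card \<Gamma>} \<Gamma>"
    using ex_bij_betw_nat_finite[OF assms(1)] by blast
  let ?n = "card \<Gamma>" and ?A = "laplacian_mat e (card \<Gamma>)"
  have A: "?A \<in> carrier_mat ?n ?n"
    by (simp add: laplacian_mat_def)
  obtain j where j: "j < ?n" "e j = p"
    using e assms(2) by (metis atLeastLessThan_iff bij_betw_def imageE)
  obtain f where f: "f \<in> carrier (ZGamma \<Gamma>)" "vec ?n (\<lambda>i. f (e i)) = col (adj_mat ?A) j"
    using ex_ZGamma_coordinates[OF e] adj_mat(1)[OF A] j(1) by (meson col_carrier_vec)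
  have "reduced_laplacian \<Gamma> f q = chips_at p (det ?A) q" for q
  proof (cases "q \<in> \<Gamma>")
    case True
    then obtain i where i: "i < ?n" "q = e i"
      using e by (metis atLeastLessThan_iff bij_betw_def imageE)
    have "e i = p \<longleftrightarrow> i = j"
      using e i(1) j by (auto simp: bij_betw_def inj_on_def)
    then show ?thesis
      using reduced_laplacian_in_coordinates[OF assms(1) e i(1)] mult_mat_vec_col_adj_mat[OF A j(1)]
        f(2) i j(1)
      by (simp add: chips_at_def)
  next
    case False
    then show ?thesis
      using assms(2) by (auto simp: reduced_laplacian_def chips_at_def)
  qed
  \<comment> \<open>\<open>det ?A\<close> may be negative; rescaling by it makes the multiple a positive square.\<close>
  then have "reduced_laplacian \<Gamma> (\<lambda>v. det ?A * f v) = chips_at p (det ?A * det ?A)"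
    by (simp add: reduced_laplacian_scale chips_at_def fun_eq_iff)
  moreover have "det ?A * det ?A > 0"
    using det_laplacian_mat_neq_0[OF assms(1) e] by (auto simp: zero_less_mult_iff linorder_neq_iff)
  moreover have "(\<lambda>v. det ?A * f v) \<in> carrier (ZGamma \<Gamma>)"
    using f(1) by (simp add: ZGamma_def)
  ultimately show ?thesis
    by blast
qed

definition corner_weight :: "int \<Rightarrow> int \<Rightarrow> int \<times> int \<Rightarrow> int" where
  "corner_weight a b v = (fst v - a + 1) * (snd v - b + 1)"

lemma corner_weight_laplacian_dvd:
  assumes "(x, y) \<in> square_domain a b N"
  shows "int N + 1 dvd reduced_laplacian (square_domain a b N) (corner_weight a b) (x, y)"
proof -
  let ?\<Gamma> = "square_domain a b N" and ?c = "corner_weight a b"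
  have x: "a \<le> x" "x \<le> a + int N - 1" and y: "b \<le> y" "y \<le> b + int N - 1"
    using assms by (auto simp: square_domain_def)
  have boundary: "int N + 1 dvd (of_bool ((p, q) \<in> ?\<Gamma>) - 1) * ?c (p, q)"
    if "a - 1 \<le> p" "p \<le> a + int N" "b - 1 \<le> q" "q \<le> b + int N" for p q
  proof (cases "(p, q) \<in> ?\<Gamma>")
    case False
    then have "p = a - 1 \<or> p = a + int N \<or> q = b - 1 \<or> q = b + int N"
      using that by (auto simp: square_domain_def)
    then show ?thesis
      by (auto simp: corner_weight_def)
  qed simp
  have "?c (x + 1, y) + ?c (x - 1, y) + ?c (x, y + 1) + ?c (x, y - 1) = 4 * ?c (x, y)"
    by (simp add: corner_weight_def algebra_simps)
  then have "reduced_laplacian ?\<Gamma> ?c (x, y) =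
      (of_bool ((x + 1, y) \<in> ?\<Gamma>) - 1) * ?c (x + 1, y) +
      (of_bool ((x - 1, y) \<in> ?\<Gamma>) - 1) * ?c (x - 1, y) +
      (of_bool ((x, y + 1) \<in> ?\<Gamma>) - 1) * ?c (x, y + 1) +
      (of_bool ((x, y - 1) \<in> ?\<Gamma>) - 1) * ?c (x, y - 1)"
    unfolding reduced_laplacian_at[OF assms] left_diff_distrib by linarith
  also have "int N + 1 dvd \<dots>"
    using x y by (intro dvd_add boundary) auto
  finally show ?thesis .
qed

lemma laplacian_eq_chips_at_corner_imp_dvd:
  assumes "N > 0" "reduced_laplacian (square_domain a b N) g = chips_at (a, b) k"
  shows "int N + 1 dvd k"
proof -
  let ?\<Gamma> = "square_domain a b N" and ?c = "corner_weight a b"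
  have fin: "finite ?\<Gamma>" and corner: "(a, b) \<in> ?\<Gamma>"
    using assms(1) by (auto simp: square_domain_def)
  have "k = (\<Sum>v\<in>?\<Gamma>. ?c v * chips_at (a, b) k v)"
    using fin corner by (simp add: chips_at_def corner_weight_def if_distrib cong: if_cong)
  also have "\<dots> = (\<Sum>v\<in>?\<Gamma>. g v * reduced_laplacian ?\<Gamma> ?c v)"
    using sum_mult_reduced_laplacian_commute[OF fin] assms(2) by metis
  also have "int N + 1 dvd \<dots>"
    using corner_weight_laplacian_dvd by (intro dvd_sum dvd_mult) auto
  finally show ?thesis .
qed

lemma comm_group_ZGamma: "comm_group (ZGamma \<Gamma>)"
proof (rule comm_groupI)
  fix f assume "f \<in> carrier (ZGamma \<Gamma>)"
  then show "\<exists>g\<in>carrier (ZGamma \<Gamma>). g \<otimes>\<^bsub>ZGamma \<Gamma>\<^esub> f = \<one>\<^bsub>ZGamma \<Gamma>\<^esub>"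
    by (intro bexI[of _ "\<lambda>v. - f v"]) (auto simp: ZGamma_def)
qed (auto simp: ZGamma_def)

lemma nat_pow_ZGamma: "f [^]\<^bsub>ZGamma \<Gamma>\<^esub> (n :: nat) = (\<lambda>v. int n * f v)"
  by (induction n) (simp_all add: ZGamma_def algebra_simps)

lemma reduced_laplacian_hom: "reduced_laplacian \<Gamma> \<in> hom (ZGamma \<Gamma>) (ZGamma \<Gamma>)"
  by (rule homI) (auto simp: ZGamma_def reduced_laplacian_def sum.distrib)

abbreviation laplacian_lattice :: "(int \<times> int) set \<Rightarrow> ((int \<times> int) \<Rightarrow> int) set" where
  "laplacian_lattice \<Gamma> \<equiv> reduced_laplacian \<Gamma> ` carrier (ZGamma \<Gamma>)"

lemma normal_laplacian_lattice: "laplacian_lattice \<Gamma> \<lhd> ZGamma \<Gamma>"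
proof -
  have "group_hom (ZGamma \<Gamma>) (ZGamma \<Gamma>) (reduced_laplacian \<Gamma>)"
    using comm_group_ZGamma reduced_laplacian_hom
    by (simp add: group_hom_def group_hom_axioms_def comm_group.axioms(2))
  then show ?thesis
    by (intro comm_group.subgroup_imp_normal[OF comm_group_ZGamma] group_hom.img_is_subgroup)
qed

lemma group_sandpile_group: "group (sandpile_group \<Gamma>)"
  unfolding sandpile_group_def by (rule normal.factorgroup_is_group[OF normal_laplacian_lattice])

lemma sandpile_group_chips_pow_eq_one_iff:
  assumes "p \<in> \<Gamma>"
  shows "(laplacian_lattice \<Gamma> #>\<^bsub>ZGamma \<Gamma>\<^esub> chips_at p 1) [^]\<^bsub>sandpile_group \<Gamma>\<^esub> n = \<one>\<^bsub>sandpile_group \<Gamma>\<^esub>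
    \<longleftrightarrow> chips_at p (int n) \<in> laplacian_lattice \<Gamma>"
proof -
  let ?Z = "ZGamma \<Gamma>" and ?I = "laplacian_lattice \<Gamma>"
  have Z: "group ?Z"
    by (rule comm_group.axioms(2)[OF comm_group_ZGamma])
  have chips: "chips_at p k \<in> carrier ?Z" for k
    using assms by (simp add: ZGamma_def chips_at_def)
  have "group_hom ?Z (sandpile_group \<Gamma>) (\<lambda>f. ?I #>\<^bsub>?Z\<^esub> f)"
    unfolding sandpile_group_def
    using Z normal.r_coset_hom_Mod[OF normal_laplacian_lattice]
      normal.factorgroup_is_group[OF normal_laplacian_lattice]
    by (simp add: group_hom_def group_hom_axioms_def)
  then have "(?I #>\<^bsub>?Z\<^esub> chips_at p 1) [^]\<^bsub>sandpile_group \<Gamma>\<^esub> n =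
      ?I #>\<^bsub>?Z\<^esub> (chips_at p 1 [^]\<^bsub>?Z\<^esub> n)"
    using chips by (simp add: group_hom.hom_nat_pow)
  also have "chips_at p 1 [^]\<^bsub>?Z\<^esub> n = chips_at p (int n)"
    by (simp add: nat_pow_ZGamma chips_at_def fun_eq_iff)
  finally have "(?I #>\<^bsub>?Z\<^esub> chips_at p 1) [^]\<^bsub>sandpile_group \<Gamma>\<^esub> n =
      ?I #>\<^bsub>?Z\<^esub> chips_at p (int n)" .
  moreover have "?I #>\<^bsub>?Z\<^esub> f = ?I \<longleftrightarrow> f \<in> ?I" if "f \<in> carrier ?Z" for f
    using group.coset_join1[OF Z _ that] group.coset_join2[OF Z that]
      normal_imp_subgroup[OF normal_laplacian_lattice] by blast
  ultimately show ?thesis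
    using chips by (simp add: sandpile_group_def)
qed

lemma (in group) powers_iso_integer_mod_group:
  assumes "x \<in> carrier G"
  shows "G\<lparr>carrier := range (\<lambda>k::int. x [^] k)\<rparr> \<cong> integer_mod_group (ord x)"
proof -
  let ?n = "int (ord x)" and ?Zn = "integer_mod_group (ord x)"
  have pow_eq: "x [^] k = x [^] l \<longleftrightarrow> k mod ?n = l mod ?n" for k l :: int
    using int_pow_eq[OF assms] by (simp add: mod_eq_dvd_iff dvd_diff_commute)
  have carrier: "k \<in> carrier ?Zn \<longleftrightarrow> k mod ?n = k" for k
    by (auto simp: carrier_integer_mod_group)
      (metis pos_mod_sign of_nat_0_less_iff, metis pos_mod_bound of_nat_0_less_iff)
  have "(\<lambda>k. x [^] k) \<in> iso ?Zn (G\<lparr>carrier := range (\<lambda>k::int. x [^] k)\<rparr>)"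
  proof (rule isoI)
    show "(\<lambda>k. x [^] k) \<in> hom ?Zn (G\<lparr>carrier := range (\<lambda>k::int. x [^] k)\<rparr>)"
      using pow_eq[of "(_ + _) mod ?n" "_ + _"] by (intro homI) (auto simp: int_pow_mult assms)
    show "bij_betw (\<lambda>k. x [^] k) (carrier ?Zn) (carrier (G\<lparr>carrier := range (\<lambda>k::int. x [^] k)\<rparr>))"
      unfolding bij_betw_def inj_on_def using pow_eq carrier
      by (auto simp: image_iff)
  qed
  then show ?thesis
    by (intro group.iso_sym[OF group_integer_mod_group] is_isoI)
qed

lemma sandpile_group_square_ord_multipleE:
  assumes "N > 0"
  obtains y where "y \<in> carrier (sandpile_group (square_domain a b N))"
    and "group.ord (sandpile_group (square_domain a b N)) y \<noteq> 0"
    and "N + 1 dvd group.ord (sandpile_group (square_domain a b N)) y"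
proof -
  let ?\<Gamma> = "square_domain a b N"
  let ?S = "sandpile_group ?\<Gamma>" and ?I = "laplacian_lattice ?\<Gamma>"
  interpret S: group ?S
    by (rule group_sandpile_group)
  have fin: "finite ?\<Gamma>" and corner: "(a, b) \<in> ?\<Gamma>"
    using assms by (auto simp: square_domain_def)
  define y where "y = ?I #>\<^bsub>ZGamma ?\<Gamma>\<^esub> chips_at (a, b) 1"
  have y: "y \<in> carrier ?S"
    unfolding y_def sandpile_group_def carrier_FactGroup
    using corner by (intro imageI) (simp add: ZGamma_def chips_at_def)
  have pow: "y [^]\<^bsub>?S\<^esub> n = \<one>\<^bsub>?S\<^esub> \<longleftrightarrow> chips_at (a, b) (int n) \<in> ?I" for n
    unfolding y_def by (rule sandpile_group_chips_pow_eq_one_iff[OF corner])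
  obtain D g where "D > 0" "g \<in> carrier (ZGamma ?\<Gamma>)" "reduced_laplacian ?\<Gamma> g = chips_at (a, b) D"
    using ex_reduced_laplacian_eq_chips_at[OF fin corner] by blast
  then have "y [^]\<^bsub>?S\<^esub> nat D = \<one>\<^bsub>?S\<^esub>"
    unfolding pow by (metis image_eqI int_nat_eq less_imp_le)
  then have "S.ord y dvd nat D"
    using S.pow_eq_id[OF y] by simp
  then have "S.ord y \<noteq> 0"
    using \<open>D > 0\<close> by (intro notI) simp
  have "chips_at (a, b) (int (S.ord y)) \<in> ?I"
    using pow S.pow_ord_eq_1[OF y] by simp
  then obtain g' where "reduced_laplacian ?\<Gamma> g' = chips_at (a, b) (int (S.ord y))"
    by (metis imageE)
  then have "int N + 1 dvd int (S.ord y)"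
    by (rule laplacian_eq_chips_at_corner_imp_dvd[OF assms])
  then have "int (N + 1) dvd int (S.ord y)"
    by (simp add: add.commute)
  then have "N + 1 dvd S.ord y"
    by (simp only: int_dvd_int_iff)
  with y \<open>S.ord y \<noteq> 0\<close> show ?thesis
    by (rule that)
qed

theorem lemma3:
  fixes N :: nat and a b :: int
  assumes "odd N" and "N > 0"
  shows "\<exists>H. subgroup H (sandpile_group (square_domain a b N)) \<and>
             (sandpile_group (square_domain a b N))\<lparr>carrier := H\<rparr>
               \<cong> integer_mod_group ((N + 1) div 2)"
proof -
  let ?S = "sandpile_group (square_domain a b N)"
  interpret S: group ?S
    by (rule group_sandpile_group)
  obtain y where y: "y \<in> carrier ?S" "S.ord y \<noteq> 0" "N + 1 dvd S.ord y"
    using sandpile_group_square_ord_multipleE[OF assms(2)] by blast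
  define m where "m = (N + 1) div 2"
  have "N + 1 = 2 * m"
    using assms(1) by (auto simp: m_def elim!: oddE)
  then obtain k where "S.ord y = m * k"
    using y(3) by (metis dvd_mult_right dvd_def)
  then have "S.ord (y [^]\<^bsub>?S\<^esub> k) = m"
    using S.ord_pow[OF y(1), of k] y(2) by simp
  moreover have z: "y [^]\<^bsub>?S\<^esub> k \<in> carrier ?S"
    using y(1) by simp
  ultimately show ?thesis
    using S.subgroup_of_powers[OF z] S.powers_iso_integer_mod_group[OF z] unfolding m_def by auto
qed

end
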